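(* Let $A\in\mathbb{R}^{n\times n}$ be symmetric positive definite, $b\in\mathbb{R}^n$, and let the $CD$ method (described in the context) be applied to $Ay=b$ with starting point $y_0\in\mathbb{R}^n$ and real parameters $\gamma_k\neq 0$ for all $k\ge 0$. Then any directions $p_0,\dots,p_k$ ($k\ge0$) generated by the method are linearly independent. Moreover, within at most $n$ iterations the method computes the solution of $Ay=b$, i.e. $Ay_h=b$ for some $h\le n$.
   Context: The $CD$ method for solving $Ay=b$, with $A$ symmetric positive definite, starting point $y_0\in\mathbb{R}^n$ and nonzero real parameters $\gamma_0,\gamma_1,\dots$, is the following iteration (all norms Euclidean). Set $r_0=b-Ay_0$; if $r_0=0$ stop; set $p_0=r_0$. For $k=0,1,2,\dots$: compute $a_k=\dfrac{r_k^Tp_k}{p_k^TAp_k}$, $y_{k+1}=y_k+a_kp_k$, $r_{k+1}=r_k-a_kAp_k$; if $r_{k+1}=0$ stop; otherwise set $\sigma_k=\gamma_k\dfrac{\|Ap_k\|^2}{p_k^TAp_k}$ and, if $k=0$, $p_1=\gamma_0Ap_0-\sigma_0p_0$, while if $k\ge1$, $\omega_k=\gamma_k\dfrac{(Ap_k)^T(Ap_{k-1})}{p_{k-1}^TAp_{k-1}}$ and $p_{k+1}=\gamma_kAp_k-\sigma_kp_k-\omega_kp_{k-1}$. *)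

theory Defs
  imports "HOL-Analysis.Analysis"
begin

text \<open>State of the CD method after k steps: (y_k, r_k, p_k, p_{k-1}).
  The stopping tests (r = 0) are not built into the recursion; they appear
  as hypotheses/side conditions in the theorem.  For k = 0 the previous
  direction component is a dummy 0 and is not used.\<close>

primrec cd_iter ::
  "real^'n^'n \<Rightarrow> real^'n \<Rightarrow> real^'n \<Rightarrow> (nat \<Rightarrow> real) \<Rightarrow> nat
     \<Rightarrow> (real^'n) \<times> (real^'n) \<times> (real^'n) \<times> (real^'n)" where
  "cd_iter A b y0 g 0 = (y0, b - A *v y0, b - A *v y0, 0)"
| "cd_iter A b y0 g (Suc k) =
     (let (y, r, p, q) = cd_iter A b y0 g k;
          Ap = A *v p;
          a = (r \<bullet> p) / (p \<bullet> Ap);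
          \<sigma> = g k * (norm Ap)^2 / (p \<bullet> Ap);
          \<omega> = (if k = 0 then 0 else g k * (Ap \<bullet> (A *v q)) / (q \<bullet> (A *v q)))
      in (y + a *\<^sub>R p, r - a *\<^sub>R Ap,
          (if k = 0 then g k *\<^sub>R Ap - \<sigma> *\<^sub>R p
           else g k *\<^sub>R Ap - \<sigma> *\<^sub>R p - \<omega> *\<^sub>R q), p))"

definition cd_y where "cd_y A b y0 g k = fst (cd_iter A b y0 g k)"
definition cd_r where "cd_r A b y0 g k = fst (snd (cd_iter A b y0 g k))"
definition cd_p where "cd_p A b y0 g k = fst (snd (snd (cd_iter A b y0 g k)))"

end

theory Submission
  imports Defs
begin

text \<open>The directions are pairwise A-conjugate: by the recurrence, A p_i lies in the span of
  p_0, ..., p_(i+1), and sigma_k, omega_k are chosen so that p_(k+1) is conjugate to p_k and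
  p_(k-1); conjugacy to the older directions follows from this three-term structure. Nonzero
  conjugate vectors are linearly independent. The residual r_k is orthogonal to p_0, ..., p_(k-1).
  Hence the directions stay nonzero while the residuals do: if p_(k+1) = 0, the span of
  p_0, ..., p_k is A-invariant and contains r_0 = p_0, hence also r_(k+1), which is orthogonal
  to that span and therefore vanishes. If r_0, ..., r_n were all nonzero, p_0, ..., p_n would be
  n + 1 independent vectors in R^n.\<close>

lemma inner_matrix_vector_symmetric:
  fixes A :: "real^'n^'n"
  assumes "transpose A = A"
  shows "x \<bullet> (A *v z) = (A *v x) \<bullet> z"
  by (metis assms dot_lmul_matrix vector_transpose_matrix)

lemma conjugate_combination_coeff_eq_0:
  fixes A :: "real^'n^'n" and v :: "'i \<Rightarrow> real^'n"
  assumes "finite I"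
    and conj: "\<And>i j. i \<in> I \<Longrightarrow> j \<in> I \<Longrightarrow> i \<noteq> j \<Longrightarrow> v j \<bullet> (A *v v i) = 0"
    and nondeg: "\<And>i. i \<in> I \<Longrightarrow> v i \<bullet> (A *v v i) \<noteq> 0"
    and comb: "(\<Sum>j\<in>I. c j *\<^sub>R v j) = 0"
    and "i \<in> I"
  shows "c i = 0"
proof -
  have "0 = (\<Sum>j\<in>I. c j *\<^sub>R v j) \<bullet> (A *v v i)" using comb by simp
  also have "\<dots> = (\<Sum>j\<in>I. if j = i then c i * (v i \<bullet> (A *v v i)) else 0)"
    by (auto simp: inner_sum_left conj \<open>i \<in> I\<close> intro: sum.cong)
  also have "\<dots> = c i * (v i \<bullet> (A *v v i))" using assms(1,5) by simp
  finally show ?thesis using nondeg[OF \<open>i \<in> I\<close>] by simp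
qed

lemma trivial_combinations_imp_less_DIM:
  fixes v :: "nat \<Rightarrow> 'a::euclidean_space"
  assumes trivial: "\<And>c. (\<Sum>j\<le>k. c j *\<^sub>R v j) = 0 \<Longrightarrow> \<forall>j\<le>k. c j = 0"
  shows "k < DIM('a)"
proof -
  have inj: "inj_on v {..k}"
  proof (rule inj_onI, rule ccontr)
    fix i j assume ij: "i \<in> {..k}" "j \<in> {..k}" "v i = v j" "i \<noteq> j"
    define c where "c l = (if l = i then 1 else 0) - (if l = j then 1 else 0 :: real)" for l
    have "(\<Sum>l\<le>k. c l *\<^sub>R v l) = v i - v j"
      using ij(1,2)
      by (simp add: c_def scaleR_left_diff_distrib sum_subtractf if_distrib[of "\<lambda>a. a *\<^sub>R _"]
          cong: if_cong)
    then have "c i = 0" using trivial ij by simp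
    then show False using ij(4) by (simp add: c_def)
  qed
  have "independent (v ` {..k})"
  proof (rule independent_if_scalars_zero)
    fix f x assume sum: "(\<Sum>x\<in>v ` {..k}. f x *\<^sub>R x) = 0" and "x \<in> v ` {..k}"
    then obtain i where "i \<le> k" "x = v i" by auto
    moreover have "(\<Sum>j\<le>k. f (v j) *\<^sub>R v j) = 0" using sum by (simp add: sum.reindex[OF inj])
    ultimately show "f x = 0" using trivial[of "f \<circ> v"] by simp
  qed simp
  then have "card (v ` {..k}) \<le> DIM('a)" using independent_bound by blast
  then show ?thesis using card_image[OF inj] by simp
qed

locale cd_method =
  fixes A :: "real^'n^'n" and b y0 :: "real^'n" and g :: "nat \<Rightarrow> real"
  assumes symm: "transpose A = A"
    and posdef: "\<And>x. x \<noteq> 0 \<Longrightarrow> x \<bullet> (A *v x) > 0"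
    and gamma: "\<And>k. g k \<noteq> 0"
begin

abbreviation "p \<equiv> cd_p A b y0 g"
abbreviation "r \<equiv> cd_r A b y0 g"
abbreviation "y \<equiv> cd_y A b y0 g"

definition sigma :: "nat \<Rightarrow> real" where
  "sigma k = g k * (norm (A *v p k))\<^sup>2 / (p k \<bullet> (A *v p k))"

definition omega :: "nat \<Rightarrow> real" where
  "omega k = (if k = 0 then 0
              else g k * ((A *v p k) \<bullet> (A *v p (k - 1))) / (p (k - 1) \<bullet> (A *v p (k - 1))))"

lemma inner_A_commute: "x \<bullet> (A *v z) = z \<bullet> (A *v x)"
  by (metis inner_matrix_vector_symmetric[OF symm] inner_commute)

lemma inner_A_self_nonzero: "x \<noteq> 0 \<Longrightarrow> x \<bullet> (A *v x) \<noteq> 0"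
  using posdef by force

lemma p_0: "p 0 = r 0"
  by (simp add: cd_p_def cd_r_def)

lemma y_Suc: "y (Suc k) = y k + ((r k \<bullet> p k) / (p k \<bullet> (A *v p k))) *\<^sub>R p k"
  by (simp add: cd_p_def cd_r_def cd_y_def Let_def split: prod.splits)

lemma r_Suc: "r (Suc k) = r k - ((r k \<bullet> p k) / (p k \<bullet> (A *v p k))) *\<^sub>R (A *v p k)"
  by (simp add: cd_p_def cd_r_def Let_def split: prod.splits)

text \<open>For k = 0 the last term vanishes since omega 0 = 0; p (0 - 1) is just p 0.\<close>

lemma p_Suc: "p (Suc k) = g k *\<^sub>R (A *v p k) - sigma k *\<^sub>R p k - omega k *\<^sub>R p (k - 1)"
proof (cases k)
  case (Suc m)
  have "snd (snd (snd (cd_iter A b y0 g (Suc m)))) = p m"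
    by (simp add: cd_p_def Let_def split: prod.splits)
  then show ?thesis
    using Suc by (simp add: cd_p_def sigma_def omega_def Let_def split: prod.splits)
qed (simp add: cd_p_def sigma_def omega_def Let_def split: prod.splits)

lemma r_eq_residual: "r k = b - A *v y k"
proof (induction k)
  case 0
  then show ?case by (simp add: cd_r_def cd_y_def)
next
  case (Suc k)
  then show ?case
    by (simp add: r_Suc y_Suc matrix_vector_right_distrib matrix_vector_mult_scaleR)
qed

lemma A_p_in_span: "A *v p k \<in> span (p ` {..Suc k})"
proof -
  have "g k *\<^sub>R (A *v p k) = p (Suc k) + sigma k *\<^sub>R p k + omega k *\<^sub>R p (k - 1)"
    by (simp add: p_Suc)
  also have "\<dots> \<in> span (p ` {..Suc k})"
    by (intro span_add span_scale span_base) auto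
  finally have "(1 / g k) *\<^sub>R (g k *\<^sub>R (A *v p k)) \<in> span (p ` {..Suc k})"
    by (rule span_scale)
  then show ?thesis using gamma[of k] by simp
qed

lemma p_conjugate_Suc:
  assumes nz: "\<forall>i\<le>k. p i \<noteq> 0"
    and conj: "\<And>i j. i < j \<Longrightarrow> j \<le> k \<Longrightarrow> p i \<bullet> (A *v p j) = 0"
    and "i \<le> k"
  shows "p i \<bullet> (A *v p (Suc k)) = 0"
proof -
  have expand: "p i \<bullet> (A *v p (Suc k)) = g k * ((A *v p i) \<bullet> (A *v p k))
      - sigma k * (p i \<bullet> (A *v p k)) - omega k * (p i \<bullet> (A *v p (k - 1)))"
    by (simp add: p_Suc matrix_vector_mult_diff_distrib matrix_vector_mult_scaleR
        inner_diff_right inner_matrix_vector_symmetric[OF symm])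
  consider "i = k" | "i = k - 1" "0 < k" | "Suc i < k" using \<open>i \<le> k\<close> by linarith
  then show ?thesis
  proof cases
    case 1
    have "omega k * (p k \<bullet> (A *v p (k - 1))) = 0"
      using conj[of "k - 1" k] by (simp add: omega_def inner_A_commute[of "p k"])
    then show ?thesis
      using expand 1 inner_A_self_nonzero[of "p k"] nz
      by (simp add: sigma_def power2_norm_eq_inner)
  next
    case 2
    then show ?thesis
      using expand conj[of "k - 1" k] inner_A_self_nonzero[of "p (k - 1)"] nz
      by (simp add: omega_def inner_commute)
  next
    case 3
    have "orthogonal (A *v p k) (A *v p i)"
    proof (rule orthogonal_to_span[OF A_p_in_span])
      fix v assume "v \<in> p ` {..Suc i}"
      then obtain l where "v = p l" "l \<le> Suc i" by auto
      moreover have "p l \<bullet> (A *v p k) = 0" using conj 3 \<open>l \<le> Suc i\<close> by simp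
      ultimately show "orthogonal (A *v p k) v" by (simp add: orthogonal_def inner_commute)
    qed
    then show ?thesis
      using expand 3 conj[of i k] conj[of i "k - 1"]
      by (simp add: orthogonal_def inner_commute)
  qed
qed

lemma p_conjugate:
  assumes "\<forall>i\<le>k. p i \<noteq> 0" and "i < j" and "j \<le> k"
  shows "p i \<bullet> (A *v p j) = 0"
  using assms
proof (induction k arbitrary: i j)
  case 0
  then show ?case by simp
next
  case (Suc k)
  show ?case
  proof (cases "j = Suc k")
    case True
    then show ?thesis
      using Suc by (auto intro!: p_conjugate_Suc)
  next
    case False
    then show ?thesis using Suc by simp
  qed
qed

lemma r_orthogonal_p:
  assumes "\<forall>i<k. p i \<noteq> 0" and "i < k"
  shows "r k \<bullet> p i = 0"
  using assms
proof (induction k arbitrary: i)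
  case 0
  then show ?case by simp
next
  case (Suc k)
  have step: "r (Suc k) \<bullet> p i = r k \<bullet> p i - ((r k \<bullet> p k) / (p k \<bullet> (A *v p k))) * (p i \<bullet> (A *v p k))"
    by (simp add: r_Suc inner_diff_left inner_commute[of "A *v p k"])
  show ?case
  proof (cases "i = k")
    case True
    then show ?thesis
      using step Suc.prems inner_A_self_nonzero[of "p k"] by (simp add: inner_commute)
  next
    case False
    then show ?thesis
      using step Suc p_conjugate[of k i k] by simp
  qed
qed

lemma r_in_span_if_p_Suc_eq_0:
  assumes "p (Suc k) = 0" and "m \<le> Suc k"
  shows "r m \<in> span (p ` {..k})"
  using \<open>m \<le> Suc k\<close>
proof (induction m)
  case 0
  then show ?case by (simp add: p_0[symmetric] span_base)
next
  case (Suc m)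
  have "p ` {..Suc m} \<subseteq> span (p ` {..k})"
    using Suc.prems assms(1) by (auto simp: le_Suc_eq span_base span_zero)
  then have "A *v p m \<in> span (p ` {..k})"
    using A_p_in_span span_mono by (metis span_span subsetD)
  then show ?case
    using Suc by (simp add: r_Suc span_diff span_scale)
qed

lemma p_nonzero:
  assumes "\<forall>j\<le>k. r j \<noteq> 0" and "i \<le> k"
  shows "p i \<noteq> 0"
  using assms
proof (induction k arbitrary: i)
  case 0
  then show ?case by (simp add: p_0)
next
  case (Suc k)
  then have nz: "\<forall>i\<le>k. p i \<noteq> 0" by simp
  have "p (Suc k) \<noteq> 0"
  proof
    assume "p (Suc k) = 0"
    then have "r (Suc k) \<in> span (p ` {..k})" by (rule r_in_span_if_p_Suc_eq_0) simp
    moreover have "orthogonal (r (Suc k)) v" if "v \<in> p ` {..k}" for v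
      using that nz r_orthogonal_p[of "Suc k"] by (auto simp: orthogonal_def)
    ultimately have "orthogonal (r (Suc k)) (r (Suc k))" by (rule orthogonal_to_span)
    then show False using Suc.prems(1) by (simp add: orthogonal_def)
  qed
  then show ?case using Suc nz le_Suc_eq by auto
qed

lemma p_combination_coeff_eq_0:
  assumes "\<forall>j\<le>k. r j \<noteq> 0" and "(\<Sum>j\<le>k. c j *\<^sub>R p j) = 0" and "i \<le> k"
  shows "c i = 0"
proof (rule conjugate_combination_coeff_eq_0[of "{..k}" p A])
  fix i j assume "i \<in> {..k}" "j \<in> {..k}" "i \<noteq> j"
  then show "p j \<bullet> (A *v p i) = 0"
    using p_conjugate p_nonzero[OF assms(1)] inner_A_commute
    by (metis atMost_iff linorder_neqE_nat)
qed (use assms p_nonzero inner_A_self_nonzero in auto)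

end

theorem lemma3:
  fixes A :: "real^'n^'n" and b y0 :: "real^'n" and \<gamma> :: "nat \<Rightarrow> real"
  assumes symm: "transpose A = A"
    and posdef: "\<And>x. x \<noteq> 0 \<Longrightarrow> x \<bullet> (A *v x) > 0"
    and gamma: "\<And>k. \<gamma> k \<noteq> 0"
  shows "(\<forall>k. (\<forall>j\<le>k. cd_r A b y0 \<gamma> j \<noteq> 0) \<longrightarrow>
            (\<forall>c :: nat \<Rightarrow> real. (\<Sum>j\<le>k. c j *\<^sub>R cd_p A b y0 \<gamma> j) = 0 \<longrightarrow> (\<forall>j\<le>k. c j = 0)))
         \<and> (\<exists>h\<le>CARD('n). A *v cd_y A b y0 \<gamma> h = b)"
proof -
  interpret cd_method A b y0 \<gamma> using assms by unfold_locales
  have independent: "\<forall>j\<le>k. c j = 0"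
    if "\<forall>j\<le>k. r j \<noteq> 0" and "(\<Sum>j\<le>k. c j *\<^sub>R p j) = 0" for k c
    using p_combination_coeff_eq_0 that by blast
  moreover have "\<exists>h\<le>CARD('n). A *v y h = b"
  proof (rule ccontr)
    assume "\<not> ?thesis"
    then have "\<forall>j\<le>CARD('n). r j \<noteq> 0" by (auto simp: r_eq_residual)
    then have "CARD('n) < DIM(real^'n)"
      using independent by (intro trivial_combinations_imp_less_DIM[where v = p]) blast
    then show False by simp
  qed
  ultimately show ?thesis by blast
qed

end
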